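(* For all natural numbers $t\ge 6$ and $s\ge 5$, $\mathrm{toi}(K_{2t}\times K_s)\ge ts$.
   Context: All graphs are finite, simple and loopless. A graph $G$ contains a graph $F$ as a totally odd strong immersion if there is an injective map $\varphi\colon V(F)\to V(G)$ (terminals) and, for every edge $uv\in E(F)$, a path $P_{uv}$ in $G$ with endpoints $\varphi(u),\varphi(v)$, such that the paths are pairwise edge-disjoint, no terminal is an interior vertex of any of them, and every $P_{uv}$ has odd length. $\mathrm{toi}(G)$ is the maximum $t$ such that $G$ contains $K_t$ as a totally odd strong immersion. The direct product $G\times H$ has vertex set $V(G)\times V(H)$, with $(g_1,h_1)\sim(g_2,h_2)$ iff $g_1g_2\in E(G)$ and $h_1h_2\in E(H)$. *)

theory Defs
  imports Main
begin

text \<open>A (finite, simple, loopless) graph is a pair (V, E) of a vertex set and a set of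
  edges, each edge being a two-element set of vertices.\<close>

type_synonym 'a graph = "'a set \<times> 'a set set"

definition verts :: "'a graph \<Rightarrow> 'a set" where "verts G = fst G"
definition edges :: "'a graph \<Rightarrow> 'a set set" where "edges G = snd G"

definition complete_graph :: "nat \<Rightarrow> nat graph" where
  "complete_graph n = ({0..<n}, {{i, j} | i j. i < n \<and> j < n \<and> i \<noteq> j})"

definition direct_product :: "'a graph \<Rightarrow> 'b graph \<Rightarrow> ('a \<times> 'b) graph" where
  "direct_product G H =
     (verts G \<times> verts H,
      {{(g1, h1), (g2, h2)} | g1 h1 g2 h2.
         {g1, g2} \<in> edges G \<and> {h1, h2} \<in> edges H})"

definition is_path :: "'a graph \<Rightarrow> 'a list \<Rightarrow> bool" where
  "is_path G xs \<longleftrightarrow> xs \<noteq> [] \<and> distinct xs \<and> set xs \<subseteq> verts G \<and>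
     (\<forall>i. Suc i < length xs \<longrightarrow> {xs ! i, xs ! Suc i} \<in> edges G)"

definition path_edges :: "'a list \<Rightarrow> 'a set set" where
  "path_edges xs = {{xs ! i, xs ! Suc i} | i. Suc i < length xs}"

definition path_len :: "'a list \<Rightarrow> nat" where
  "path_len xs = length xs - 1"

definition interior :: "'a list \<Rightarrow> 'a set" where
  "interior xs = set (butlast (tl xs))"

definition totally_odd_strong_immersion ::
  "'a graph \<Rightarrow> 'b graph \<Rightarrow> ('b \<Rightarrow> 'a) \<Rightarrow> ('b set \<Rightarrow> 'a list) \<Rightarrow> bool" where
  "totally_odd_strong_immersion G F \<phi> P \<longleftrightarrow>
     inj_on \<phi> (verts F) \<and> \<phi> ` verts F \<subseteq> verts G \<and>
     (\<forall>e \<in> edges F. is_path G (P e) \<and> {hd (P e), last (P e)} = \<phi> ` e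
                     \<and> odd (path_len (P e))) \<and>
     (\<forall>e \<in> edges F. \<forall>e' \<in> edges F. e \<noteq> e' \<longrightarrow> path_edges (P e) \<inter> path_edges (P e') = {}) \<and>
     (\<forall>e \<in> edges F. \<forall>x \<in> verts F. \<phi> x \<notin> interior (P e))"

definition contains_toi :: "'a graph \<Rightarrow> 'b graph \<Rightarrow> bool" where
  "contains_toi G F \<longleftrightarrow> (\<exists>\<phi> P. totally_odd_strong_immersion G F \<phi> P)"

definition toi :: "'a graph \<Rightarrow> nat" where
  "toi G = (GREATEST t. contains_toi G (complete_graph t))"

end

theory Submission
  imports Defs
begin

(*
  In K_{2t} x K_s take the t s vertices (i, b) with i < t as terminals; the
  vertices (t + k, d) are hubs, the copy of column k at level d.  Terminals in different
  columns and different levels are adjacent.  Two terminals (i, b), (j, b) on a common level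
  are joined through the hubs of columns j and i at the levels b + 1 and b - 1 (mod s), the
  choice being made by a tournament on the columns in which every column beats its cyclic
  successor.  Two terminals (i, b), (i, c) with b < c in a common column are joined through the
  hub of column i at level c and the hub of a neighbouring column at level b.  All these paths
  have length 1 or 3, and their interiors consist of hubs.  They are edge-disjoint because the
  pair of terminals of a path can be decoded from any one of its edges.  The construction
  already works for t >= 3.
*)

lemma verts_complete_graph: "verts (complete_graph n) = {0..<n}"
  by (simp add: verts_def complete_graph_def)

lemma edges_complete_graphE:
  assumes "e \<in> edges (complete_graph n)"
  obtains u v where "e = {u, v}" "u < v" "v < n"
  using assms unfolding edges_def complete_graph_def
  by (auto simp: insert_commute) (metis insert_commute linorder_neqE_nat)

lemma verts_direct_product: "verts (direct_product G H) = verts G \<times> verts H"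
  by (simp add: direct_product_def verts_def)

lemma direct_product_complete_edgeI:
  assumes "g1 < m" "g2 < m" "g1 \<noteq> g2" "h1 < s" "h2 < s" "h1 \<noteq> h2"
  shows "{(g1, h1), (g2, h2)} \<in> edges (direct_product (complete_graph m) (complete_graph s))"
proof -
  have "{g1, g2} \<in> edges (complete_graph m)" "{h1, h2} \<in> edges (complete_graph s)"
    using assms by (auto simp: edges_def complete_graph_def)
  then show ?thesis unfolding direct_product_def edges_def by auto
qed

lemma is_path_2:
  "a \<noteq> b \<Longrightarrow> {a, b} \<subseteq> verts G \<Longrightarrow> {a, b} \<in> edges G \<Longrightarrow> is_path G [a, b]"
  by (auto simp: is_path_def less_Suc_eq)

lemma is_path_4:
  "distinct [a, b, c, d] \<Longrightarrow> {a, b, c, d} \<subseteq> verts G \<Longrightarrow>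
   {a, b} \<in> edges G \<Longrightarrow> {b, c} \<in> edges G \<Longrightarrow> {c, d} \<in> edges G \<Longrightarrow> is_path G [a, b, c, d]"
  by (auto simp: is_path_def less_Suc_eq numeral_eq_Suc)

lemma path_edges_singleton [simp]: "path_edges [a] = {}"
  by (simp add: path_edges_def)

lemma path_edges_Cons_Cons [simp]:
  "path_edges (a # b # xs) = insert {a, b} (path_edges (b # xs))"
proof
  show "path_edges (a # b # xs) \<subseteq> insert {a, b} (path_edges (b # xs))"
    unfolding path_edges_def by (auto simp: less_Suc_eq_0_disj)
  show "insert {a, b} (path_edges (b # xs)) \<subseteq> path_edges (a # b # xs)"
    unfolding path_edges_def
    by auto (metis length_Cons nth_Cons_0 nth_Cons_Suc zero_less_Suc,
        metis Suc_less_eq length_Cons nth_Cons_Suc)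
qed

lemma path_edges_doubleton:
  assumes "e \<in> path_edges xs"
  obtains a b where "e = {a, b}"
  using assms unfolding path_edges_def by blast

lemma toi_lower_bound:
  assumes "finite (verts G)" and "contains_toi G (complete_graph n)"
  shows "n \<le> toi G"
proof -
  have "m \<le> card (verts G)" if contains: "contains_toi G (complete_graph m)" for m
  proof -
    obtain \<phi> P where "totally_odd_strong_immersion G (complete_graph m) \<phi> P"
      using contains unfolding contains_toi_def by blast
    then have "inj_on \<phi> {0..<m}" "\<phi> ` {0..<m} \<subseteq> verts G"
      unfolding totally_odd_strong_immersion_def by (auto simp: verts_complete_graph)
    then show ?thesis using card_inj_on_le[OF _ _ assms(1)] by fastforce
  qed
  then show ?thesis
    unfolding toi_def using assms(2) by (blast intro: Greatest_le_nat)
qed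

lemma contains_toi_complete_graphI:
  fixes f :: "nat \<Rightarrow> 'a" and R :: "nat \<Rightarrow> nat \<Rightarrow> 'a list"
    and owner :: "'a \<Rightarrow> 'a \<Rightarrow> 'a \<times> 'a"
  assumes inj: "inj_on f {0..<n}" and terminals: "f ` {0..<n} \<subseteq> verts G"
    and paths: "\<And>u v. u < v \<Longrightarrow> v < n \<Longrightarrow>
      is_path G (R u v) \<and> hd (R u v) = f u \<and> last (R u v) = f v \<and>
      odd (path_len (R u v)) \<and> interior (R u v) \<inter> f ` {0..<n} = {}"
    and owner: "\<And>u v a b. u < v \<Longrightarrow> v < n \<Longrightarrow> {a, b} \<in> path_edges (R u v) \<Longrightarrow>
      owner a b = (f u, f v)"
  shows "contains_toi G (complete_graph n)"
proof -
  define P where "P e = R (Min e) (Max e)" for e :: "nat set"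
  have P_edge: "P {u, v} = R u v" if "u < v" for u v
    using that by (simp add: P_def)
  have "path_edges (P e) \<inter> path_edges (P e') = {}"
    if e: "e \<in> edges (complete_graph n)" and e': "e' \<in> edges (complete_graph n)"
      and "e \<noteq> e'" for e e'
  proof (rule ccontr)
    obtain u v where uv: "e = {u, v}" "u < v" "v < n"
      using e by (rule edges_complete_graphE)
    obtain u' v' where uv': "e' = {u', v'}" "u' < v'" "v' < n"
      using e' by (rule edges_complete_graphE)
    assume "path_edges (P e) \<inter> path_edges (P e') \<noteq> {}"
    then obtain x where x: "x \<in> path_edges (R u v)" "x \<in> path_edges (R u' v')"
      using uv(1,2) uv'(1,2) P_edge by auto
    obtain a b where "x = {a, b}"
      using x(1) by (rule path_edges_doubleton)
    with x have ab: "{a, b} \<in> path_edges (R u v)" "{a, b} \<in> path_edges (R u' v')"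
      by simp_all
    have "f u = f u'" "f v = f v'"
      using owner[OF uv(2,3) ab(1)] owner[OF uv'(2,3) ab(2)] by simp_all
    then have "u = u'" "v = v'"
      using inj uv(2,3) uv'(2,3) by (auto dest: inj_onD)
    with uv uv' \<open>e \<noteq> e'\<close> show False by simp
  qed
  moreover have "is_path G (P e) \<and> {hd (P e), last (P e)} = f ` e \<and> odd (path_len (P e))
      \<and> (\<forall>x \<in> {0..<n}. f x \<notin> interior (P e))"
    if e: "e \<in> edges (complete_graph n)" for e
  proof -
    obtain u v where uv: "e = {u, v}" "u < v" "v < n"
      using e by (rule edges_complete_graphE)
    then show ?thesis
      using paths[OF uv(2,3)] P_edge[OF uv(2)] by auto
  qed
  ultimately have "totally_odd_strong_immersion G (complete_graph n) f P"
    using inj terminals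
    unfolding totally_odd_strong_immersion_def verts_complete_graph by blast
  then show ?thesis
    unfolding contains_toi_def by blast
qed

definition beats :: "nat \<Rightarrow> nat \<Rightarrow> nat \<Rightarrow> bool" where
  "beats t i j \<longleftrightarrow> (i < j \<and> \<not> (i = 0 \<and> j = t - 1)) \<or> (i = t - 1 \<and> j = 0)"

lemma beats_succ: "3 \<le> t \<Longrightarrow> i < t \<Longrightarrow> beats t i ((i + 1) mod t)"
  by (auto simp: beats_def mod_Suc)

lemma beats_pred: "3 \<le> t \<Longrightarrow> i < t \<Longrightarrow> beats t ((i + t - 1) mod t) i"
  by (cases i) (auto simp: beats_def mod_if)

lemma beats_tournament:
  "3 \<le> t \<Longrightarrow> i < t \<Longrightarrow> j < t \<Longrightarrow> i \<noteq> j \<Longrightarrow> beats t i j \<longleftrightarrow> \<not> beats t j i"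
  by (auto simp: beats_def)

definition hub_level :: "nat \<Rightarrow> nat \<Rightarrow> nat \<Rightarrow> nat \<Rightarrow> nat \<Rightarrow> nat" where
  "hub_level t s i j b = (if beats t i j then (b + 1) mod s else (b + s - 1) mod s)"

text \<open>The neighbour is chosen by the gap c - b so that the middle edge of the same-column
  route cannot be mistaken for the middle edge of a same-level route, and its last edge, joining
  a hub at level b to the terminal (i, c), not for an end edge of a same-level route at level c.\<close>

definition detour_column :: "nat \<Rightarrow> nat \<Rightarrow> nat \<Rightarrow> nat \<Rightarrow> nat \<Rightarrow> nat" where
  "detour_column t s i b c = (if c - b < s - 2 then (i + 1) mod t else (i + t - 1) mod t)"

fun route :: "nat \<Rightarrow> nat \<Rightarrow> nat \<times> nat \<Rightarrow> nat \<times> nat \<Rightarrow> (nat \<times> nat) list" where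
  "route t s (i, b) (j, c) =
     (if i = j then [(i, b), (t + i, c), (t + detour_column t s i b c, b), (i, c)]
      else if b \<noteq> c then [(i, b), (j, c)]
      else [(i, b), (t + j, hub_level t s i j b), (t + i, hub_level t s j i b), (j, b)])"

fun sorted_pair :: "nat \<times> nat \<Rightarrow> nat \<times> nat \<Rightarrow> (nat \<times> nat) \<times> (nat \<times> nat)" where
  "sorted_pair (i, b) (j, c) =
     (if i < j \<or> (i = j \<and> b < c) then ((i, b), (j, c)) else ((j, c), (i, b)))"

fun owner_terminal_hub ::
  "nat \<Rightarrow> nat \<Rightarrow> nat \<times> nat \<Rightarrow> nat \<times> nat \<Rightarrow> (nat \<times> nat) \<times> (nat \<times> nat)" where
  "owner_terminal_hub t s (i, b) (k, d) =
     (if k = i then ((i, b), (i, d))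
      else if d = hub_level t s i k b then ((min i k, b), (max i k, b))
      else ((i, d), (i, b)))"

text \<open>In a same-level route from (i, b) to (j, b) the middle edge joins the hub of the winner
  at level b - 1 to the hub of the loser at level b + 1; the middle edge of a same-column route
  from (i, b) to (i, c) has its upper end c in column i.\<close>

fun owner_hub_hub ::
  "nat \<Rightarrow> nat \<Rightarrow> nat \<times> nat \<Rightarrow> nat \<times> nat \<Rightarrow> (nat \<times> nat) \<times> (nat \<times> nat)" where
  "owner_hub_hub t s (k1, d1) (k2, d2) =
     (if beats t k1 k2 \<and> d2 = (d1 + 2) mod s
      then ((min k1 k2, (d1 + 1) mod s), (max k1 k2, (d1 + 1) mod s))
      else if beats t k2 k1 \<and> d1 = (d2 + 2) mod s
      then ((min k1 k2, (d2 + 1) mod s), (max k1 k2, (d2 + 1) mod s))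
      else if d2 < d1 then ((k1, d2), (k1, d1)) else ((k2, d1), (k2, d2)))"

definition owner :: "nat \<Rightarrow> nat \<Rightarrow> nat \<times> nat \<Rightarrow> nat \<times> nat \<Rightarrow> (nat \<times> nat) \<times> (nat \<times> nat)" where
  "owner t s x y =
     (if fst x < t \<and> fst y < t then sorted_pair x y
      else if fst x < t then owner_terminal_hub t s x (fst y - t, snd y)
      else if fst y < t then owner_terminal_hub t s y (fst x - t, snd x)
      else owner_hub_hub t s (fst x - t, snd x) (fst y - t, snd y))"

lemma hub_level_lt: "0 < s \<Longrightarrow> hub_level t s i j b < s"
  by (simp add: hub_level_def)

lemma detour_column_properties:
  assumes "3 \<le> t" "5 \<le> s" "i < t" "b < c" "c < s"
  defines "k \<equiv> detour_column t s i b c"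
  shows "k < t" "k \<noteq> i"
    and "owner_terminal_hub t s (i, c) (k, b) = ((i, b), (i, c))"
    and "owner_hub_hub t s (i, c) (k, b) = ((i, b), (i, c))"
    and "owner_hub_hub t s (k, b) (i, c) = ((i, b), (i, c))"
proof -
  have "k < t \<and> k \<noteq> i \<and> owner_terminal_hub t s (i, c) (k, b) = ((i, b), (i, c))
    \<and> owner_hub_hub t s (i, c) (k, b) = ((i, b), (i, c))
    \<and> owner_hub_hub t s (k, b) (i, c) = ((i, b), (i, c))"
  proof (cases "c - b < s - 2")
    case True
    then have k: "k = (i + 1) mod t"
      by (simp add: k_def detour_column_def)
    have "k < t" "k \<noteq> i"
      using assms(1,3) by (auto simp: k mod_Suc)
    moreover have "beats t i k" "\<not> beats t k i"
      using assms(1,3) beats_succ[of t i] beats_tournament[of t i k] \<open>k < t\<close> \<open>k \<noteq> i\<close>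
      by (auto simp: k)
    moreover have "b \<noteq> (c + 1) mod s" "b \<noteq> (c + 2) mod s"
      using True assms(4,5) by (auto simp: mod_Suc mod_if)
    ultimately show ?thesis
      using assms(4) by (simp add: hub_level_def)
  next
    case False
    then have k: "k = (i + t - 1) mod t"
      by (simp add: k_def detour_column_def)
    have "k < t" "k \<noteq> i"
      using assms(1,3) by (auto simp: k) (cases i; simp add: mod_if)
    moreover have "beats t k i" "\<not> beats t i k"
      using assms(1,3) beats_pred[of t i] beats_tournament[of t i k] \<open>k < t\<close> \<open>k \<noteq> i\<close>
      by (auto simp: k)
    moreover have "b \<noteq> (c + s - 1) mod s" "c \<noteq> (b + 2) mod s"
      using False assms(2,4,5) by (auto simp: mod_if)
    ultimately show ?thesis
      using assms(4) by (simp add: hub_level_def)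
  qed
  then show "k < t" "k \<noteq> i"
    and "owner_terminal_hub t s (i, c) (k, b) = ((i, b), (i, c))"
    and "owner_hub_hub t s (i, c) (k, b) = ((i, b), (i, c))"
    and "owner_hub_hub t s (k, b) (i, c) = ((i, b), (i, c))"
    by auto
qed

lemma hub_level_ne:
  assumes "3 \<le> t" "3 \<le> s" "i < t" "j < t" "i \<noteq> j" "b < s"
  shows "hub_level t s i j b \<noteq> b" "hub_level t s i j b \<noteq> hub_level t s j i b"
  using assms beats_tournament[of t i j] by (auto simp: hub_level_def mod_if)

lemma owner_hub_hub_same_level:
  assumes "3 \<le> t" "3 \<le> s" "i < t" "j < t" "i \<noteq> j" "b < s"
  shows "owner_hub_hub t s (j, hub_level t s i j b) (i, hub_level t s j i b)
    = ((min i j, b), (max i j, b))"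
proof -
  have "((b + s - 1) mod s + 2) mod s = (b + 1) mod s" "((b + s - 1) mod s + 1) mod s = b"
    using assms(2,6) by (cases b; simp add: mod_if)+
  then show ?thesis
    using assms beats_tournament[of t i j] by (auto simp: hub_level_def)
qed

lemma doubleton_in_path_edges_4:
  "{x, y} \<in> path_edges [a, b, c, d] \<Longrightarrow>
   (x, y) \<in> {(a, b), (b, a), (b, c), (c, b), (c, d), (d, c)}"
  by (auto simp: doubleton_eq_iff)

lemma owner_route_same_column:
  assumes "3 \<le> t" "5 \<le> s" "i < t" "b < c" "c < s"
    and "{x, y} \<in> path_edges (route t s (i, b) (i, c))"
  shows "owner t s x y = ((i, b), (i, c))"
proof -
  define k where "k = detour_column t s i b c"
  note k = detour_column_properties[OF assms(1-5), folded k_def]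
  have "(x, y) \<in> {((i, b), (t + i, c)), ((t + i, c), (i, b)), ((t + i, c), (t + k, b)),
      ((t + k, b), (t + i, c)), ((t + k, b), (i, c)), ((i, c), (t + k, b))}"
    using doubleton_in_path_edges_4 assms(6) by (simp add: k_def)
  then show ?thesis
    using k assms(3) by (elim insertE emptyE) (simp_all add: owner_def)
qed

lemma owner_route_same_level:
  assumes "3 \<le> t" "3 \<le> s" "i < j" "j < t" "b < s"
    and "{x, y} \<in> path_edges (route t s (i, b) (j, b))"
  shows "owner t s x y = ((i, b), (j, b))"
proof -
  define d d' where "d = hub_level t s i j b" and "d' = hub_level t s j i b"
  have "(x, y) \<in> {((i, b), (t + j, d)), ((t + j, d), (i, b)), ((t + j, d), (t + i, d')),
      ((t + i, d'), (t + j, d)), ((t + i, d'), (j, b)), ((j, b), (t + i, d'))}"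
    using doubleton_in_path_edges_4 assms(3,6) by (simp add: d_def d'_def)
  then show ?thesis
    using assms owner_hub_hub_same_level[of t s i j b] owner_hub_hub_same_level[of t s j i b]
    by (elim insertE emptyE) (simp_all add: owner_def d_def d'_def)
qed

lemma owner_route_direct:
  assumes "i < j" "j < t" "b \<noteq> c"
    and "{x, y} \<in> path_edges (route t s (i, b) (j, c))"
  shows "owner t s x y = ((i, b), (j, c))"
proof -
  have "(x, y) = ((i, b), (j, c)) \<or> (x, y) = ((j, c), (i, b))"
    using assms by (simp add: doubleton_eq_iff)
  then show ?thesis
    using assms(1,2) by (elim disjE) (simp_all add: owner_def)
qed

lemma owner_route:
  assumes "3 \<le> t" "5 \<le> s" "i < t" "j < t" "b < s" "c < s" "i < j \<or> (i = j \<and> b < c)"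
    and "{x, y} \<in> path_edges (route t s (i, b) (j, c))"
  shows "owner t s x y = ((i, b), (j, c))"
proof -
  consider "i = j" "b < c" | "i < j" "b \<noteq> c" | "i < j" "b = c"
    using assms(7) by blast
  then show ?thesis
  proof cases
    case 1
    then show ?thesis
      using owner_route_same_column[of t s i b c x y] assms(1-3,6,8)
      by (simp del: route.simps path_edges_Cons_Cons)
  next
    case 2
    then show ?thesis
      using owner_route_direct[of i j t b c x y s] assms(4,8) by blast
  next
    case 3
    then show ?thesis
      using owner_route_same_level[of t s i j b x y] assms(1,2,4,5,8)
      by (simp del: route.simps path_edges_Cons_Cons)
  qed
qed

lemma route_odd_path:
  assumes "3 \<le> t" "5 \<le> s" "i < t" "j < t" "b < s" "c < s" "i < j \<or> (i = j \<and> b < c)"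
  defines "R \<equiv> route t s (i, b) (j, c)"
  shows "is_path (direct_product (complete_graph (2 * t)) (complete_graph s)) R"
    and "hd R = (i, b)" "last R = (j, c)" "odd (path_len R)" "\<forall>w \<in> interior R. t \<le> fst w"
proof -
  note verts = verts_direct_product verts_complete_graph
  consider "i = j" "b < c" | "i < j" "b \<noteq> c" | "i < j" "b = c"
    using assms(7) by blast
  then have "is_path (direct_product (complete_graph (2 * t)) (complete_graph s)) R
    \<and> hd R = (i, b) \<and> last R = (j, c) \<and> odd (path_len R) \<and> (\<forall>w \<in> interior R. t \<le> fst w)"
  proof cases
    case 1
    then show ?thesis
      using assms detour_column_properties[of t s i b c]
      by (auto simp: path_len_def interior_def verts intro!: is_path_4 direct_product_complete_edgeI)
  next
    case 2
    then show ?thesis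
      using assms
      by (auto simp: path_len_def interior_def verts intro!: is_path_2 direct_product_complete_edgeI)
  next
    case 3
    then show ?thesis
      using assms hub_level_lt[of s t] hub_level_ne[of t s i j b] hub_level_ne[of t s j i b]
      by (auto simp: path_len_def interior_def verts intro!: is_path_4 direct_product_complete_edgeI)
  qed
  then show "is_path (direct_product (complete_graph (2 * t)) (complete_graph s)) R"
    and "hd R = (i, b)" "last R = (j, c)" "odd (path_len R)" "\<forall>w \<in> interior R. t \<le> fst w"
    by auto
qed

lemma div_mod_lex_less:
  fixes u v s :: nat
  assumes "u < v" "0 < s"
  shows "u div s < v div s \<or> (u div s = v div s \<and> u mod s < v mod s)"
proof -
  have "u div s \<le> v div s" using assms by (simp add: div_le_mono)
  moreover have "u mod s < v mod s" if "u div s = v div s"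
  proof -
    have "u div s * s + u mod s < v div s * s + v mod s" using assms by simp
    then show ?thesis using that by (metis nat_add_left_cancel_less)
  qed
  ultimately show ?thesis by linarith
qed

lemma contains_toi_direct_product_complete_graph:
  assumes t: "3 \<le> t" and s: "5 \<le> s"
  shows "contains_toi (direct_product (complete_graph (2 * t)) (complete_graph s))
    (complete_graph (t * s))"
proof -
  let ?G = "direct_product (complete_graph (2 * t)) (complete_graph s)"
  define f where "f n = (n div s, n mod s)" for n
  have f_range: "n div s < t" "n mod s < s" if "n < t * s" for n
    using that s by (auto simp: less_mult_imp_div_less)
  show ?thesis
  proof (rule contains_toi_complete_graphI[where f = f and owner = "owner t s"
        and R = "\<lambda>u v. route t s (f u) (f v)"])
    show "inj_on f {0..<t * s}"
      unfolding inj_on_def f_def by (metis div_mult_mod_eq prod.inject)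
    show "f ` {0..<t * s} \<subseteq> verts ?G"
      using f_range by (fastforce simp: f_def verts_direct_product verts_complete_graph)
  next
    fix u v assume uv: "u < v" "v < t * s"
    let ?R = "route t s (f u) (f v)"
    have u: "u div s < t" "u mod s < s" and v: "v div s < t" "v mod s < s"
      using f_range uv by auto
    have lex: "u div s < v div s \<or> (u div s = v div s \<and> u mod s < v mod s)"
      using div_mod_lex_less uv(1) s by simp
    note route_facts = route_odd_path[OF t s u(1) v(1) u(2) v(2) lex]
      owner_route[OF t s u(1) v(1) u(2) v(2) lex]
    have "interior ?R \<inter> f ` {0..<t * s} = {}"
      using route_facts(5) f_range(1) by (force simp: f_def simp del: route.simps)
    then show "is_path ?G ?R \<and> hd ?R = f u \<and> last ?R = f v \<and> odd (path_len ?R)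
        \<and> interior ?R \<inter> f ` {0..<t * s} = {}"
      using route_facts(1-4) by (simp add: f_def del: route.simps)
    show "owner t s a b = (f u, f v)" if "{a, b} \<in> path_edges ?R" for a b
      using route_facts(6) that by (simp add: f_def del: route.simps)
  qed
qed

theorem mainTheorem4:
  fixes t s :: nat
  assumes "t \<ge> 6" and "s \<ge> 5"
  shows "t * s \<le> toi (direct_product (complete_graph (2 * t)) (complete_graph s))"
proof (rule toi_lower_bound)
  show "finite (verts (direct_product (complete_graph (2 * t)) (complete_graph s)))"
    by (simp add: verts_direct_product verts_complete_graph)
  show "contains_toi (direct_product (complete_graph (2 * t)) (complete_graph s))
      (complete_graph (t * s))"
    using assms by (intro contains_toi_direct_product_complete_graph) auto
qed

end
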